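(* Let $G=(V,E)$ be a graph, $v\in V$, $S_v$ the partial star product of $v$, and suppose that the number $k$ of equivalence classes of $\mathfrak d_v^*$ that contain an edge of $E_v$ is $1$ or $2$. Let $\mathbb S_1,\dots,\mathbb S_k$ be the corresponding star factors. Then $S_v\simeq\Box_{i=1}^k\mathbb S_i$.
   Context: All graphs are finite, simple and undirected. For $G=(V,E)$ and $v\in V$, $E_v$ is the set of edges incident to $v$. For two distinct adjacent edges $e=(v,u)$, $f=(v,w)$, a square spanned by $e$ and $f$ is a $4$-cycle $v,u,x,w,v$ with $x\notin\{v,u,w\}$; it is chordless if neither $(u,w)$ nor $(v,x)$ is an edge. In a chordless square $v,u,x,w$, $(x,w)$ is opposite to $(v,u)$ and $(x,u)$ is opposite to $(v,w)$ (and vice versa). The relation $\delta(G)$ on $E$: $(e,f)\in\delta(G)$ iff (i) $e,f$ are distinct adjacent edges and it is not the case that $e$ and $f$ span exactly one square and that square is chordless; or (ii) $e,f$ are opposite edges of a chordless square; or (iii) $e=f$. Define $\mathfrak d_v=((E_v\times E)\cup(E\times E_v))\cap\delta(G)$ and $\mathfrak d_v^*$ the finest equivalence relation on $E$ containing $\mathfrak d_v$. Let $F_v\subseteq E\setminus E_v$ be the set of edges that are the edges not incident to $v$ of some chordless square spanned by two edges $e,e'\in E_v$ with $(e,e')\notin\mathfrak d_v^*$. The partial star product $S_v$ is the subgraph of $G$ with edge set $E_v\cup F_v$ and vertex set the endpoints of these edges. For an equivalence class $\varphi$ of $\mathfrak d_v^*$, $N_\varphi(v)=\{u:(v,u)\in\varphi\}$;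 the star factor of $\varphi$ is the graph with vertex set $N_\varphi(v)\cup\{v\}$ and edge set $\{(v,u):u\in N_\varphi(v)\}$. $\Box$ denotes the Cartesian graph product. *)

theory Defs
  imports Main
begin

definition graph :: "'a set \<Rightarrow> 'a set set \<Rightarrow> bool" where
  "graph V E \<longleftrightarrow> finite V \<and> (\<forall>e\<in>E. \<exists>u w. e = {u, w} \<and> u \<noteq> w \<and> u \<in> V \<and> w \<in> V)"

definition inc :: "'a set set \<Rightarrow> 'a \<Rightarrow> 'a set set" where
  "inc E v = {e \<in> E. v \<in> e}"

definition sq_cycle :: "'a set set \<Rightarrow> 'a \<Rightarrow> 'a \<Rightarrow> 'a \<Rightarrow> 'a \<Rightarrow> bool" where
  "sq_cycle E a b c d \<longleftrightarrow> distinct [a, b, c, d] \<and>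
     {a, b} \<in> E \<and> {b, c} \<in> E \<and> {c, d} \<in> E \<and> {d, a} \<in> E"

definition chordless_sq :: "'a set set \<Rightarrow> 'a \<Rightarrow> 'a \<Rightarrow> 'a \<Rightarrow> 'a \<Rightarrow> bool" where
  "chordless_sq E a b c d \<longleftrightarrow> sq_cycle E a b c d \<and> {a, c} \<notin> E \<and> {b, d} \<notin> E"

definition adj_edges :: "'a set set \<Rightarrow> 'a set \<Rightarrow> 'a set \<Rightarrow> bool" where
  "adj_edges E e f \<longleftrightarrow> e \<in> E \<and> f \<in> E \<and> e \<noteq> f \<and> e \<inter> f \<noteq> {}"

definition one_chordless_square :: "'a set set \<Rightarrow> 'a set \<Rightarrow> 'a set \<Rightarrow> bool" where
  "one_chordless_square E e f \<longleftrightarrow>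
     (\<exists>v u w. e = {v, u} \<and> f = {v, w} \<and> v \<noteq> u \<and> v \<noteq> w \<and> u \<noteq> w \<and>
        (\<exists>!x. sq_cycle E v u x w) \<and> (\<forall>x. sq_cycle E v u x w \<longrightarrow> chordless_sq E v u x w))"

definition opposite :: "'a set set \<Rightarrow> 'a set \<Rightarrow> 'a set \<Rightarrow> bool" where
  "opposite E e f \<longleftrightarrow> (\<exists>a b c d. chordless_sq E a b c d \<and>
     ((e = {a, b} \<and> f = {c, d}) \<or> (e = {b, c} \<and> f = {d, a})))"

definition delta :: "'a set set \<Rightarrow> ('a set \<times> 'a set) set" where
  "delta E = {(e, f). e \<in> E \<and> f \<in> E \<and>
     ((adj_edges E e f \<and> \<not> one_chordless_square E e f) \<or> opposite E e f \<or> e = f)}"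

definition dv :: "'a set set \<Rightarrow> 'a \<Rightarrow> ('a set \<times> 'a set) set" where
  "dv E v = ((inc E v \<times> E) \<union> (E \<times> inc E v)) \<inter> delta E"

definition dv_star :: "'a set set \<Rightarrow> 'a \<Rightarrow> ('a set \<times> 'a set) set" where
  "dv_star E v = \<Inter> {R. equiv E R \<and> dv E v \<subseteq> R}"

definition Fv :: "'a set set \<Rightarrow> 'a \<Rightarrow> 'a set set" where
  "Fv E v = {g \<in> E - inc E v. \<exists>u w x.
      {v, u} \<in> E \<and> {v, w} \<in> E \<and> ({v, u}, {v, w}) \<notin> dv_star E v \<and>
      chordless_sq E v u x w \<and> (g = {u, x} \<or> g = {x, w})}"

definition Sv_E :: "'a set set \<Rightarrow> 'a \<Rightarrow> 'a set set" where
  "Sv_E E v = inc E v \<union> Fv E v"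

definition Sv_V :: "'a set set \<Rightarrow> 'a \<Rightarrow> 'a set" where
  "Sv_V E v = \<Union> (Sv_E E v)"

definition star_classes :: "'a set set \<Rightarrow> 'a \<Rightarrow> 'a set set set" where
  "star_classes E v = {\<phi> \<in> E // dv_star E v. \<phi> \<inter> inc E v \<noteq> {}}"

definition N_phi :: "'a set set \<Rightarrow> 'a \<Rightarrow> 'a set" where
  "N_phi \<phi> v = {u. {v, u} \<in> \<phi>}"

definition star_V :: "'a set set \<Rightarrow> 'a \<Rightarrow> 'a set" where
  "star_V \<phi> v = insert v (N_phi \<phi> v)"

definition star_E :: "'a set set \<Rightarrow> 'a \<Rightarrow> 'a set set" where
  "star_E \<phi> v = {{v, u} | u. u \<in> N_phi \<phi> v}"

definition cprod_V :: "'a set \<Rightarrow> 'b set \<Rightarrow> ('a \<times> 'b) set" where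
  "cprod_V V1 V2 = V1 \<times> V2"

definition cprod_E :: "'a set \<Rightarrow> 'a set set \<Rightarrow> 'b set \<Rightarrow> 'b set set \<Rightarrow> ('a \<times> 'b) set set" where
  "cprod_E V1 E1 V2 E2 =
     {{(a, b), (a', b')} | a b a' b'. a \<in> V1 \<and> a' \<in> V1 \<and> b \<in> V2 \<and> b' \<in> V2 \<and>
        ((a = a' \<and> {b, b'} \<in> E2) \<or> (b = b' \<and> {a, a'} \<in> E1))}"

definition graph_iso :: "'a set \<Rightarrow> 'a set set \<Rightarrow> 'b set \<Rightarrow> 'b set set \<Rightarrow> bool" where
  "graph_iso V1 E1 V2 E2 \<longleftrightarrow> (\<exists>f. bij_betw f V1 V2 \<and>
     (\<forall>x\<in>V1. \<forall>y\<in>V1. {x, y} \<in> E1 \<longleftrightarrow> {f x, f y} \<in> E2))"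

end

theory Submission
  imports Defs
begin

text \<open>With a single class, any two edges at
  \<open>v\<close> are \<open>\<delta>\<^sup>*\<close>-related, so \<open>F\<^sub>v\<close> is empty and \<open>S\<^sub>v\<close> is the star itself.
  With two classes \<open>\<phi>1\<close>, \<open>\<phi>2\<close>, edges \<open>vu \<in> \<phi>1\<close> and \<open>vw \<in> \<phi>2\<close> are not \<open>\<delta>\<close>-related, so by the
  definition of \<open>\<delta>\<close> they span exactly one square \<open>v, u, x, w\<close>, and it is chordless.
  The map \<open>(v, v) \<mapsto> v\<close>, \<open>(u, v) \<mapsto> u\<close>, \<open>(v, w) \<mapsto> w\<close>, \<open>(u, w) \<mapsto> x\<close> is then an isomorphism
  from the product of the two stars onto \<open>S\<^sub>v\<close>: the product edges at the axes go to the
  edges at \<open>v\<close>, the others to the edges \<open>ux\<close> and \<open>xw\<close> making up \<open>F\<^sub>v\<close>.\<close>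

lemma equiv_dv_star: "equiv E (dv_star E v)"
proof -
  let ?F = "{R. equiv E R \<and> dv E v \<subseteq> R}"
  have "dv E v \<subseteq> E \<times> E" by (auto simp: dv_def delta_def)
  then have "E \<times> E \<in> ?F" by (auto simp: equiv_def refl_on_def sym_def trans_def)
  then have "\<Inter> ?F \<subseteq> E \<times> E" by blast
  moreover have "refl_on E (\<Inter> ?F)" by (auto simp: equiv_def refl_on_def)
  moreover have "sym (\<Inter> ?F)" by (auto simp: equiv_def sym_def)
  moreover have "trans (\<Inter> ?F)" by (auto simp: equiv_def intro!: transI dest: transD)
  ultimately show ?thesis unfolding dv_star_def by (intro equivI)
qed

lemma delta_incident_in_dv_star:
  assumes "(e, f) \<in> delta E" "e \<in> inc E v \<or> f \<in> inc E v"
  shows "(e, f) \<in> dv_star E v"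
proof -
  have "(e, f) \<in> dv E v" using assms unfolding dv_def delta_def by blast
  then show ?thesis unfolding dv_star_def by blast
qed

lemma dv_star_refl: "e \<in> E \<Longrightarrow> (e, e) \<in> dv_star E v"
  using equiv_dv_star[of E v] unfolding equiv_def by (meson refl_onD)

lemma dv_star_trans: "(e, f) \<in> dv_star E v \<Longrightarrow> (f, g) \<in> dv_star E v \<Longrightarrow> (e, g) \<in> dv_star E v"
  using equiv_dv_star unfolding equiv_def by (meson transD)

lemma dv_star_sym: "(e, f) \<in> dv_star E v \<Longrightarrow> (f, e) \<in> dv_star E v"
  using equiv_dv_star unfolding equiv_def by (meson symD)

lemma sq_cycle_intro:
  "distinct [a, b, c, d] \<Longrightarrow> {a, b} \<in> E \<Longrightarrow> {b, c} \<in> E \<Longrightarrow> {c, d} \<in> E \<Longrightarrow> {d, a} \<in> E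
    \<Longrightarrow> sq_cycle E a b c d"
  unfolding sq_cycle_def by blast

lemma sq_cycleD:
  assumes "sq_cycle E a b c d"
  shows "a \<noteq> b" "a \<noteq> c" "a \<noteq> d" "b \<noteq> c" "b \<noteq> d" "c \<noteq> d"
    "{a, b} \<in> E" "{b, a} \<in> E" "{b, c} \<in> E" "{c, b} \<in> E"
    "{c, d} \<in> E" "{d, c} \<in> E" "{d, a} \<in> E" "{a, d} \<in> E"
  using assms unfolding sq_cycle_def by (simp_all add: insert_commute)

lemma sq_cycle_swap: "sq_cycle E a b c d \<Longrightarrow> sq_cycle E b a d c"
  by (auto simp: sq_cycle_def insert_commute)

lemma sq_cycle_rev: "sq_cycle E a b c d \<Longrightarrow> sq_cycle E a d c b"
  by (auto simp: sq_cycle_def insert_commute)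

lemma doubletons_share_first:
  "{v, u} = {v', u'} \<Longrightarrow> {v, w} = {v', w'} \<Longrightarrow> u \<noteq> w \<Longrightarrow> v' = v \<and> u' = u \<and> w' = w"
  unfolding doubleton_eq_iff by blast

lemma one_chordless_squareD:
  assumes "one_chordless_square E {v, u} {v, w}" "u \<noteq> w"
  shows "(\<exists>!x. sq_cycle E v u x w) \<and> (\<forall>x. sq_cycle E v u x w \<longrightarrow> chordless_sq E v u x w)"
proof -
  obtain v' u' w' where vuw': "{v, u} = {v', u'}" "{v, w} = {v', w'}"
      "(\<exists>!x. sq_cycle E v' u' x w') \<and> (\<forall>x. sq_cycle E v' u' x w' \<longrightarrow> chordless_sq E v' u' x w')"
    using assms(1) unfolding one_chordless_square_def
    by (elim exE conjE) (rule that; (rule conjI)?; assumption)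
  have "v' = v \<and> u' = u \<and> w' = w"
    using doubletons_share_first[OF vuw'(1,2) assms(2)] .
  with vuw'(3) show ?thesis by simp
qed

lemma adj_edges_at_common_vertex:
  "{a, b} \<in> E \<Longrightarrow> {a, d} \<in> E \<Longrightarrow> b \<noteq> d \<Longrightarrow> adj_edges E {a, b} {a, d}"
  by (auto simp: adj_edges_def doubleton_eq_iff)

lemma delta_if_adj_edges:
  "adj_edges E e f \<Longrightarrow> \<not> one_chordless_square E e f \<Longrightarrow> (e, f) \<in> delta E"
  by (simp add: delta_def adj_edges_def)

lemma delta_if_opposite: "opposite E e f \<Longrightarrow> e \<in> E \<Longrightarrow> f \<in> E \<Longrightarrow> (e, f) \<in> delta E"
  by (simp add: delta_def)

lemma delta_if_two_squares:
  assumes "sq_cycle E a b c d" "sq_cycle E a b c' d" "c \<noteq> c'"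
  shows "({a, b}, {a, d}) \<in> delta E"
proof (rule delta_if_adj_edges)
  note sq = sq_cycleD[OF assms(1)]
  show "adj_edges E {a, b} {a, d}" using adj_edges_at_common_vertex sq(7,14,5) .
  show "\<not> one_chordless_square E {a, b} {a, d}"
  proof
    assume "one_chordless_square E {a, b} {a, d}"
    then have "\<exists>!x. sq_cycle E a b x d" by (rule one_chordless_squareD[OF _ sq(5), THEN conjunct1])
    with assms show False by auto
  qed
qed

lemma delta_opposite_edges:
  assumes "chordless_sq E a b c d"
  shows "({a, b}, {c, d}) \<in> delta E" "({b, c}, {d, a}) \<in> delta E"
proof -
  have "opposite E {a, b} {c, d}" "opposite E {b, c} {d, a}"
    unfolding opposite_def using assms by blast+
  moreover have "{a, b} \<in> E" "{b, c} \<in> E" "{c, d} \<in> E" "{d, a} \<in> E"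
    using assms by (auto simp: chordless_sq_def sq_cycle_def)
  ultimately show "({a, b}, {c, d}) \<in> delta E" "({b, c}, {d, a}) \<in> delta E"
    by (simp_all add: delta_if_opposite)
qed

lemma graph_edge_neq: "graph V E \<Longrightarrow> {x, y} \<in> E \<Longrightarrow> x \<noteq> y"
  unfolding graph_def by (metis doubleton_eq_iff insert_absorb2)

lemma inc_edgeE:
  assumes "graph V E" "e \<in> inc E v"
  obtains u where "e = {v, u}" "{v, u} \<in> E" "u \<noteq> v"
proof -
  obtain a b where "e = {a, b}" "a \<noteq> b" "e \<in> E" "v \<in> e"
    using assms unfolding graph_def inc_def by blast
  then show ?thesis using that by (auto simp: insert_commute)
qed

lemma N_phi_edge:
  assumes "graph V E" "\<phi> \<in> E // dv_star E v" "u \<in> N_phi \<phi> v"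
  shows "{v, u} \<in> \<phi>" "{v, u} \<in> E" "u \<noteq> v"
proof -
  show "{v, u} \<in> \<phi>" using assms(3) by (simp add: N_phi_def)
  then show "{v, u} \<in> E" using in_quotient_imp_subset[OF equiv_dv_star assms(2)] by blast
  then show "u \<noteq> v" using graph_edge_neq[OF assms(1)] by blast
qed

lemma star_classes_cover_inc:
  assumes "e \<in> inc E v"
  obtains \<phi> where "\<phi> \<in> star_classes E v" "e \<in> \<phi>"
proof
  have "e \<in> E" using assms by (simp add: inc_def)
  show "e \<in> dv_star E v `` {e}" using equiv_class_self[OF equiv_dv_star \<open>e \<in> E\<close>] .
  then show "dv_star E v `` {e} \<in> star_classes E v"
    using assms quotientI[OF \<open>e \<in> E\<close>] unfolding star_classes_def by blast
qed

lemma graph_iso_image: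
  assumes "inj_on g X" "\<Union> PE \<subseteq> X"
  shows "graph_iso (g ` X) ((`) g ` PE) X PE"
proof -
  let ?f = "inv_into X g"
  have bij: "bij_betw ?f (g ` X) X"
    using assms(1) by (simp add: bij_betw_inv_into inj_on_imp_bij_betw)
  have edges: "{g p, g q} \<in> (`) g ` PE \<longleftrightarrow> {p, q} \<in> PE" if pq: "p \<in> X" "q \<in> X" for p q
  proof
    assume "{g p, g q} \<in> (`) g ` PE"
    then obtain S where S: "S \<in> PE" "g ` S = g ` {p, q}" by auto
    then have "S \<subseteq> X" using assms(2) by blast
    then have "S = {p, q}" using S(2) inj_on_image_eq_iff[OF assms(1), of S "{p, q}"] pq by simp
    with S(1) show "{p, q} \<in> PE" by simp
  next
    assume "{p, q} \<in> PE"
    then show "{g p, g q} \<in> (`) g ` PE"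
      using rev_image_eqI[of "{p, q}" PE "{g p, g q}" "(`) g"] by simp
  qed
  have "\<forall>x\<in>g ` X. \<forall>y\<in>g ` X. {x, y} \<in> (`) g ` PE \<longleftrightarrow> {?f x, ?f y} \<in> PE"
  proof (intro ballI)
    fix x y assume "x \<in> g ` X" "y \<in> g ` X"
    then obtain p q where "p \<in> X" "q \<in> X" "x = g p" "y = g q" by blast
    then show "{x, y} \<in> (`) g ` PE \<longleftrightarrow> {?f x, ?f y} \<in> PE"
      using edges assms(1) by simp
  qed
  with bij show ?thesis unfolding graph_iso_def by (intro exI[of _ ?f] conjI)
qed

lemma cprod_E_stars:
  "cprod_E (insert v A) {{v, u} | u. u \<in> A} (insert v B) {{v, w} | w. w \<in> B} =
     {{(a, v), (a, w)} | a w. a \<in> insert v A \<and> w \<in> B} \<union>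
     {{(v, b), (u, b)} | u b. u \<in> A \<and> b \<in> insert v B}"
  (is "?P = ?L \<union> ?R")
proof (intro equalityI subsetI)
  fix S assume "S \<in> ?P"
  then obtain a b a' b' where S: "S = {(a, b), (a', b')}" "a \<in> insert v A" "a' \<in> insert v A"
      "b \<in> insert v B" "b' \<in> insert v B"
      "(a = a' \<and> {b, b'} \<in> {{v, w} | w. w \<in> B}) \<or> (b = b' \<and> {a, a'} \<in> {{v, u} | u. u \<in> A})"
    unfolding cprod_E_def by (elim CollectE exE conjE) (rule that; assumption)
  from S(6) show "S \<in> ?L \<union> ?R"
  proof (elim disjE conjE CollectE exE)
    fix w assume "a = a'" "w \<in> B" "{b, b'} = {v, w}"
    then have "S = {(a, v), (a, w)}"
      using S(1) unfolding doubleton_eq_iff by (auto simp: insert_commute)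
    with S(2) \<open>w \<in> B\<close> show ?thesis by blast
  next
    fix u assume "b = b'" "u \<in> A" "{a, a'} = {v, u}"
    then have "S = {(v, b), (u, b)}"
      using S(1) unfolding doubleton_eq_iff by (auto simp: insert_commute)
    with S(4) \<open>u \<in> A\<close> show ?thesis by blast
  qed
next
  fix S assume "S \<in> ?L \<union> ?R"
  then consider a w where "S = {(a, v), (a, w)}" "a \<in> insert v A" "w \<in> B"
    | u b where "S = {(v, b), (u, b)}" "u \<in> A" "b \<in> insert v B"
    by blast
  then show "S \<in> ?P"
  proof cases
    case 1
    then show ?thesis unfolding cprod_E_def by blast
  next
    case 2
    then show ?thesis unfolding cprod_E_def by blast
  qed
qed

lemma Union_cprod_E_stars:
  assumes "A \<noteq> {}"
  shows "\<Union> (cprod_E (insert v A) {{v, u} | u. u \<in> A} (insert v B) {{v, w} | w. w \<in> B}) =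
     insert v A \<times> insert v B"
  (is "\<Union> ?P = ?X")
proof (intro equalityI subsetI)
  fix p assume "p \<in> \<Union> ?P"
  then show "p \<in> ?X" unfolding cprod_E_stars by blast
next
  fix p assume p: "p \<in> ?X"
  obtain u where "u \<in> A" using assms by blast
  with p have "p \<in> {(v, snd p), (u, snd p)} \<or> p \<in> {(fst p, snd p), (v, snd p)}"
    by auto
  with p \<open>u \<in> A\<close> show "p \<in> \<Union> ?P" unfolding cprod_E_stars by blast
qed

section \<open>Two star classes\<close>

locale two_star_classes =
  fixes V :: "'a set" and E :: "'a set set" and v :: 'a and \<phi>1 \<phi>2 :: "'a set set"
  assumes graph: "graph V E"
    and \<phi>1: "\<phi>1 \<in> star_classes E v" and \<phi>2: "\<phi>2 \<in> star_classes E v"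
    and distinct: "\<phi>1 \<noteq> \<phi>2"
    and inc_covered: "\<forall>e\<in>inc E v. e \<in> \<phi>1 \<or> e \<in> \<phi>2"
begin

abbreviation "R \<equiv> dv_star E v"
abbreviation "N1 \<equiv> N_phi \<phi>1 v"
abbreviation "N2 \<equiv> N_phi \<phi>2 v"

lemma \<phi>1_quotient: "\<phi>1 \<in> E // R" and \<phi>2_quotient: "\<phi>2 \<in> E // R"
  using \<phi>1 \<phi>2 by (simp_all add: star_classes_def)

lemmas N1_edge = N_phi_edge[OF graph \<phi>1_quotient]
  and N2_edge = N_phi_edge[OF graph \<phi>2_quotient]

lemma not_related: "e \<in> \<phi>1 \<Longrightarrow> f \<in> \<phi>2 \<Longrightarrow> (e, f) \<notin> R"
  using quotient_eqI[OF equiv_dv_star \<phi>1_quotient \<phi>2_quotient] distinct by blast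

lemma related_N1: "u \<in> N1 \<Longrightarrow> u' \<in> N1 \<Longrightarrow> ({v, u}, {v, u'}) \<in> R"
  and related_N2: "w \<in> N2 \<Longrightarrow> w' \<in> N2 \<Longrightarrow> ({v, w}, {v, w'}) \<in> R"
  using quotient_eq_iff[OF equiv_dv_star \<phi>1_quotient \<phi>1_quotient] N1_edge(1)
    quotient_eq_iff[OF equiv_dv_star \<phi>2_quotient \<phi>2_quotient] N2_edge(1) by blast+

lemma N1_N2_disjoint: "u \<in> N1 \<Longrightarrow> u \<notin> N2"
proof
  assume "u \<in> N1" "u \<in> N2"
  moreover have "({v, u}, {v, u}) \<in> R" using dv_star_refl N1_edge(2) \<open>u \<in> N1\<close> .
  ultimately show False using not_related N1_edge(1) N2_edge(1) by blast
qed

lemma neighbour_cases: "{v, u} \<in> E \<Longrightarrow> u \<in> N1 \<or> u \<in> N2"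
  using inc_covered by (auto simp: inc_def N_phi_def)

lemma N1_nonempty: "N1 \<noteq> {}"
proof -
  obtain e where "e \<in> \<phi>1" "e \<in> inc E v" using \<phi>1 by (auto simp: star_classes_def)
  with inc_edgeE[OF graph] show ?thesis by (metis N_phi_def empty_iff mem_Collect_eq)
qed

lemma unique_chordless_square:
  assumes "u \<in> N1" "w \<in> N2"
  shows "(\<exists>!x. sq_cycle E v u x w) \<and> (\<forall>x. sq_cycle E v u x w \<longrightarrow> chordless_sq E v u x w)"
proof -
  have "u \<noteq> w" using N1_N2_disjoint assms by blast
  have "{v, u} \<in> inc E v" using N1_edge(2)[OF assms(1)] by (simp add: inc_def)
  then have "({v, u}, {v, w}) \<notin> delta E"
    using not_related[OF N1_edge(1)[OF assms(1)] N2_edge(1)[OF assms(2)]]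
      delta_incident_in_dv_star[of "{v, u}" "{v, w}" E v] by blast
  then have "one_chordless_square E {v, u} {v, w}"
    using delta_if_adj_edges
      adj_edges_at_common_vertex[OF N1_edge(2)[OF assms(1)] N2_edge(2)[OF assms(2)] \<open>u \<noteq> w\<close>]
    by blast
  then show ?thesis by (rule one_chordless_squareD[OF _ \<open>u \<noteq> w\<close>])
qed

definition fourth_vertex :: "'a \<Rightarrow> 'a \<Rightarrow> 'a" where
  "fourth_vertex u w = (THE x. sq_cycle E v u x w)"

lemma fourth_vertex_chordless_sq:
  assumes "u \<in> N1" "w \<in> N2"
  shows "chordless_sq E v u (fourth_vertex u w) w"
proof -
  note unique = unique_chordless_square[OF assms]
  then have "sq_cycle E v u (fourth_vertex u w) w"
    unfolding fourth_vertex_def by (metis theI')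
  with unique show ?thesis by blast
qed

lemma fourth_vertex_eqI:
  assumes "u \<in> N1" "w \<in> N2" "sq_cycle E v u x w"
  shows "x = fourth_vertex u w"
  using unique_chordless_square[OF assms(1,2)] assms(3)
  unfolding fourth_vertex_def by (metis the1_equality)

lemma fourth_vertex_facts:
  assumes "u \<in> N1" "w \<in> N2"
  shows "{u, fourth_vertex u w} \<in> E" "{fourth_vertex u w, w} \<in> E"
    "fourth_vertex u w \<noteq> v" "fourth_vertex u w \<notin> N1" "fourth_vertex u w \<notin> N2"
proof -
  have chordless: "chordless_sq E v u (fourth_vertex u w) w" by (rule fourth_vertex_chordless_sq[OF assms])
  then show "{u, fourth_vertex u w} \<in> E" "{fourth_vertex u w, w} \<in> E" "fourth_vertex u w \<noteq> v"
    by (auto simp: chordless_sq_def sq_cycle_def)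
  from chordless have "{v, fourth_vertex u w} \<notin> E" by (simp add: chordless_sq_def)
  then show "fourth_vertex u w \<notin> N1" "fourth_vertex u w \<notin> N2"
    using N1_edge(2) N2_edge(2) by blast+
qed

text \<open>If two of these squares share the fourth vertex \<open>x\<close> and, say, the edge \<open>vu\<close>, then \<open>uv\<close>
  and \<open>ux\<close> span two squares and are \<open>\<delta>\<close>-related; but \<open>ux\<close> is opposite to \<open>vw\<close>, which would
  link \<open>\<phi>1\<close> and \<open>\<phi>2\<close>.\<close>

lemma fourth_vertex_inj:
  assumes "u \<in> N1" "w \<in> N2" "u' \<in> N1" "w' \<in> N2"
    and "fourth_vertex u w = fourth_vertex u' w'"
  shows "u = u'" "w = w'"
proof -
  define x where "x = fourth_vertex u w"
  have chordless: "chordless_sq E v u x w"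
    using fourth_vertex_chordless_sq[OF assms(1,2)] x_def by simp
  then have sq: "sq_cycle E v u x w" by (simp add: chordless_sq_def)
  have sq': "sq_cycle E v u' x w'"
    using fourth_vertex_chordless_sq[OF assms(3,4)] assms(5) x_def by (simp add: chordless_sq_def)
  have vu: "{v, u} \<in> inc E v" and vw: "{v, w} \<in> inc E v"
    using N1_edge(2)[OF assms(1)] N2_edge(2)[OF assms(2)] by (simp_all add: inc_def)
  have unrelated: "({v, u}, {v, w}) \<notin> R"
    using not_related N1_edge(1)[OF assms(1)] N2_edge(1)[OF assms(2)] by blast
  show "w = w'"
  proof (rule ccontr)
    assume "w \<noteq> w'"
    have "u \<noteq> w'" using N1_N2_disjoint assms(1,4) by blast
    then have "sq_cycle E u v w' x" using sq_cycleD[OF sq] sq_cycleD[OF sq']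
      by (intro sq_cycle_intro) auto
    then have "({u, v}, {u, x}) \<in> delta E"
      by (rule delta_if_two_squares[OF sq_cycle_swap[OF sq] _ \<open>w \<noteq> w'\<close>])
    then have "({v, u}, {u, x}) \<in> delta E" by (simp only: insert_commute)
    then have r1: "({v, u}, {u, x}) \<in> R"
      by (rule delta_incident_in_dv_star) (use vu in blast)
    have "({u, x}, {v, w}) \<in> delta E"
      using delta_opposite_edges(2)[OF chordless] by (simp only: insert_commute)
    then have r2: "({u, x}, {v, w}) \<in> R"
      by (rule delta_incident_in_dv_star) (use vw in blast)
    from dv_star_trans[OF r1 r2] unrelated show False by blast
  qed
  show "u = u'"
  proof (rule ccontr)
    assume "u \<noteq> u'"
    have "u' \<noteq> w" using N1_N2_disjoint assms(2,3) by blast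
    then have "sq_cycle E w v u' x" using sq_cycleD[OF sq] sq_cycleD[OF sq'] \<open>w = w'\<close>
      by (intro sq_cycle_intro) auto
    then have "({w, v}, {w, x}) \<in> delta E"
      by (rule delta_if_two_squares[OF sq_cycle_swap[OF sq_cycle_rev[OF sq]] _ \<open>u \<noteq> u'\<close>])
    then have "({v, w}, {w, x}) \<in> delta E" by (simp only: insert_commute)
    then have r1: "({v, w}, {w, x}) \<in> R"
      by (rule delta_incident_in_dv_star) (use vw in blast)
    have "({v, u}, {w, x}) \<in> delta E"
      using delta_opposite_edges(1)[OF chordless] by (simp only: insert_commute)
    then have r2: "({v, u}, {w, x}) \<in> R"
      by (rule delta_incident_in_dv_star) (use vu in blast)
    from dv_star_trans[OF r2 dv_star_sym[OF r1]] unrelated show False by blast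
  qed
qed

lemma inc_eq: "inc E v = star_E \<phi>1 v \<union> star_E \<phi>2 v"
proof (intro equalityI subsetI)
  fix e assume "e \<in> inc E v"
  then obtain u where "e = {v, u}" "{v, u} \<in> E" using inc_edgeE[OF graph] by blast
  with neighbour_cases show "e \<in> star_E \<phi>1 v \<union> star_E \<phi>2 v" unfolding star_E_def by blast
next
  fix e assume "e \<in> star_E \<phi>1 v \<union> star_E \<phi>2 v"
  then show "e \<in> inc E v" unfolding star_E_def inc_def using N1_edge(2) N2_edge(2) by blast
qed

lemma Fv_eq:
  "Fv E v = {{u, fourth_vertex u w} | u w. u \<in> N1 \<and> w \<in> N2}
     \<union> {{fourth_vertex u w, w} | u w. u \<in> N1 \<and> w \<in> N2}"
  (is "_ = ?T1 \<union> ?T2")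
proof (intro equalityI subsetI)
  fix g assume "g \<in> Fv E v"
  then obtain u w x where uw: "{v, u} \<in> E" "{v, w} \<in> E" "({v, u}, {v, w}) \<notin> R"
      and sq: "chordless_sq E v u x w" and g: "g = {u, x} \<or> g = {x, w}"
    unfolding Fv_def by blast
  have sq_cycle: "sq_cycle E v u x w" using sq by (simp add: chordless_sq_def)
  consider "u \<in> N1" "w \<in> N2" | "u \<in> N2" "w \<in> N1"
    using neighbour_cases[OF uw(1)] neighbour_cases[OF uw(2)] uw(3) related_N1 related_N2
    by blast
  then show "g \<in> ?T1 \<union> ?T2"
  proof cases
    case 1
    then have "x = fourth_vertex u w" using fourth_vertex_eqI sq_cycle by blast
    with 1 g show ?thesis by blast
  next
    case 2
    then have "x = fourth_vertex w u" using fourth_vertex_eqI sq_cycle_rev[OF sq_cycle] by blast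
    with 2 g show ?thesis by (auto simp: insert_commute)
  qed
next
  fix g assume "g \<in> ?T1 \<union> ?T2"
  then obtain u w where uw: "u \<in> N1" "w \<in> N2"
      and g: "g = {u, fourth_vertex u w} \<or> g = {fourth_vertex u w, w}"
    by blast
  note fv = fourth_vertex_facts[OF uw]
  have "g \<in> E - inc E v"
    using g fv N1_edge(3)[OF uw(1)] N2_edge(3)[OF uw(2)] by (auto simp: inc_def)
  moreover have "({v, u}, {v, w}) \<notin> R"
    using not_related N1_edge(1)[OF uw(1)] N2_edge(1)[OF uw(2)] by blast
  ultimately show "g \<in> Fv E v"
    unfolding Fv_def using g fourth_vertex_chordless_sq[OF uw] N1_edge(2)[OF uw(1)] N2_edge(2)[OF uw(2)]
    by blast
qed

definition star_prod_map :: "'a \<times> 'a \<Rightarrow> 'a" where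
  "star_prod_map = (\<lambda>(a, b). if a = v then b else if b = v then a else fourth_vertex a b)"

lemma star_prod_map_simps [simp]:
  "star_prod_map (v, b) = b"
  "star_prod_map (a, v) = a"
  "u \<in> N1 \<Longrightarrow> w \<in> N2 \<Longrightarrow> star_prod_map (u, w) = fourth_vertex u w"
  using N1_edge(3) N2_edge(3) by (auto simp: star_prod_map_def)

lemma star_prod_map_cases:
  assumes "a \<in> insert v N1" "b \<in> insert v N2"
  obtains (corner) "a = v" "b = v" "star_prod_map (a, b) = v"
    | (axis1) "a \<in> N1" "b = v" "star_prod_map (a, b) = a"
    | (axis2) "a = v" "b \<in> N2" "star_prod_map (a, b) = b"
    | (inner) "a \<in> N1" "b \<in> N2" "star_prod_map (a, b) = fourth_vertex a b"
  using assms by (cases "a = v"; cases "b = v") auto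

lemma star_prod_map_inj: "inj_on star_prod_map (insert v N1 \<times> insert v N2)"
proof (rule inj_onI, clarify)
  fix a b a' b'
  assume ab: "a \<in> insert v N1" "b \<in> insert v N2" and ab': "a' \<in> insert v N1" "b' \<in> insert v N2"
    and eq: "star_prod_map (a, b) = star_prod_map (a', b')"
  have N1_facts: "\<And>u. u \<in> N1 \<Longrightarrow> u \<noteq> v \<and> u \<notin> N2"
    and N2_facts: "\<And>w. w \<in> N2 \<Longrightarrow> w \<noteq> v"
    using N1_edge(3) N2_edge(3) N1_N2_disjoint by blast+
  note fv = fourth_vertex_facts(3-5)
  from ab show "a = a' \<and> b = b'"
  proof (cases rule: star_prod_map_cases)
    case inner
    from ab' show ?thesis
    proof (cases rule: star_prod_map_cases)
      case inner': inner
      then show ?thesis using inner eq fourth_vertex_inj by simp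
    qed (use inner eq fv in force)+
  qed (use ab' eq N1_facts N2_facts fv in \<open>cases rule: star_prod_map_cases; force\<close>)+
qed

lemma star_prod_map_image_edges:
  "(`) star_prod_map ` cprod_E (star_V \<phi>1 v) (star_E \<phi>1 v) (star_V \<phi>2 v) (star_E \<phi>2 v)
     = Sv_E E v"
proof -
  let ?L = "{{(a, v), (a, w)} | a w. a \<in> insert v N1 \<and> w \<in> N2}"
  let ?R = "{{(v, b), (u, b)} | u b. u \<in> N1 \<and> b \<in> insert v N2}"
  have cprod: "cprod_E (star_V \<phi>1 v) (star_E \<phi>1 v) (star_V \<phi>2 v) (star_E \<phi>2 v) = ?L \<union> ?R"
    unfolding star_V_def star_E_def by (rule cprod_E_stars)
  have Sv_E: "Sv_E E v = star_E \<phi>1 v \<union> star_E \<phi>2 v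
      \<union> {{u, fourth_vertex u w} | u w. u \<in> N1 \<and> w \<in> N2}
      \<union> {{fourth_vertex u w, w} | u w. u \<in> N1 \<and> w \<in> N2}"
    unfolding Sv_E_def inc_eq Fv_eq by blast
  have image_sub: "star_prod_map ` S \<in> Sv_E E v" if S: "S \<in> ?L \<union> ?R" for S
  proof -
    from S consider a w where "S = {(a, v), (a, w)}" "a \<in> insert v N1" "w \<in> N2"
      | u b where "S = {(v, b), (u, b)}" "u \<in> N1" "b \<in> insert v N2"
      by blast
    then show ?thesis
    proof cases
      case 1
      then show ?thesis unfolding Sv_E star_E_def by (cases "a = v") auto
    next
      case 2
      then show ?thesis unfolding Sv_E star_E_def by (cases "b = v") (auto simp: insert_commute)
    qed
  qed
  have image_sup: "Y \<in> (`) star_prod_map ` (?L \<union> ?R)" if Y: "Y \<in> Sv_E E v" for Y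
  proof -
    from Y consider u where "u \<in> N1" "Y = {v, u}" | w where "w \<in> N2" "Y = {v, w}"
      | u w where "u \<in> N1" "w \<in> N2" "Y = {u, fourth_vertex u w}"
      | u w where "u \<in> N1" "w \<in> N2" "Y = {fourth_vertex u w, w}"
      unfolding Sv_E star_E_def N_phi_def by blast
    then show ?thesis
    proof cases
      case 1
      show ?thesis
      proof (rule image_eqI)
        show "Y = star_prod_map ` {(v, v), (u, v)}" using 1 by simp
        show "{(v, v), (u, v)} \<in> ?L \<union> ?R" using 1 by blast
      qed
    next
      case 2
      show ?thesis
      proof (rule image_eqI)
        show "Y = star_prod_map ` {(v, v), (v, w)}" using 2 by simp
        show "{(v, v), (v, w)} \<in> ?L \<union> ?R" using 2 by blast
      qed
    next
      case 3
      show ?thesis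
      proof (rule image_eqI)
        show "Y = star_prod_map ` {(u, v), (u, w)}" using 3 by simp
        show "{(u, v), (u, w)} \<in> ?L \<union> ?R" using 3 by blast
      qed
    next
      case 4
      show ?thesis
      proof (rule image_eqI)
        show "Y = star_prod_map ` {(v, w), (u, w)}" using 4 by (simp add: insert_commute)
        show "{(v, w), (u, w)} \<in> ?L \<union> ?R" using 4 by blast
      qed
    qed
  qed
  show ?thesis
    unfolding cprod using image_sub image_sup by (intro equalityI image_subsetI subsetI)
qed

theorem Sv_iso_cprod_stars:
  "graph_iso (Sv_V E v) (Sv_E E v)
     (cprod_V (star_V \<phi>1 v) (star_V \<phi>2 v))
     (cprod_E (star_V \<phi>1 v) (star_E \<phi>1 v) (star_V \<phi>2 v) (star_E \<phi>2 v))"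
proof -
  let ?PE = "cprod_E (star_V \<phi>1 v) (star_E \<phi>1 v) (star_V \<phi>2 v) (star_E \<phi>2 v)"
  have vertices: "\<Union> ?PE = insert v N1 \<times> insert v N2"
    unfolding star_V_def star_E_def using Union_cprod_E_stars[OF N1_nonempty] .
  have "Sv_V E v = star_prod_map ` (insert v N1 \<times> insert v N2)"
    unfolding Sv_V_def star_prod_map_image_edges[symmetric] vertices[symmetric] by blast
  then show ?thesis
    using graph_iso_image[OF star_prod_map_inj, of ?PE] vertices star_prod_map_image_edges
    unfolding cprod_V_def star_V_def by simp
qed

end

lemma two_star_classesI:
  assumes "graph V E" "star_classes E v = {\<phi>1, \<phi>2}" "\<phi>1 \<noteq> \<phi>2"
  shows "two_star_classes V E v \<phi>1 \<phi>2"
proof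
  show "\<forall>e\<in>inc E v. e \<in> \<phi>1 \<or> e \<in> \<phi>2"
    using star_classes_cover_inc assms(2) by (metis insertE singletonD)
qed (use assms in auto)

section \<open>A single star class\<close>

lemma Union_star_E: "N_phi \<phi> v \<noteq> {} \<Longrightarrow> \<Union> (star_E \<phi> v) = star_V \<phi> v"
  unfolding star_E_def star_V_def by blast

lemma Sv_iso_star_single_class:
  assumes graph: "graph V E" and classes: "star_classes E v = {\<phi>}"
  shows "graph_iso (Sv_V E v) (Sv_E E v) (star_V \<phi> v) (star_E \<phi> v)"
proof -
  have \<phi>: "\<phi> \<in> E // dv_star E v" "\<phi> \<inter> inc E v \<noteq> {}"
    using classes unfolding star_classes_def by blast+
  have inc_sub: "inc E v \<subseteq> \<phi>"
    using star_classes_cover_inc classes by (metis singletonD subsetI)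
  have "Fv E v = {}"
  proof -
    have "({v, u}, {v, w}) \<in> dv_star E v" if "{v, u} \<in> E" "{v, w} \<in> E" for u w
      using that inc_sub quotient_eq_iff[OF equiv_dv_star \<phi>(1) \<phi>(1)] by (auto simp: inc_def)
    then show ?thesis unfolding Fv_def by blast
  qed
  then have Sv_E: "Sv_E E v = inc E v" by (simp add: Sv_E_def)
  have star_E: "star_E \<phi> v = inc E v"
  proof (intro equalityI subsetI)
    fix e assume "e \<in> star_E \<phi> v"
    then obtain u where "e = {v, u}" "{v, u} \<in> \<phi>" unfolding star_E_def N_phi_def by blast
    moreover have "\<phi> \<subseteq> E" by (rule in_quotient_imp_subset[OF equiv_dv_star \<phi>(1)])
    ultimately show "e \<in> inc E v" by (auto simp: inc_def)
  next
    fix e assume e: "e \<in> inc E v"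
    then obtain u where "e = {v, u}" by (rule inc_edgeE[OF graph])
    with e inc_sub show "e \<in> star_E \<phi> v" unfolding star_E_def N_phi_def by blast
  qed
  have "N_phi \<phi> v \<noteq> {}" using \<phi>(2) star_E unfolding star_E_def by blast
  then have Sv_V: "Sv_V E v = star_V \<phi> v"
    unfolding Sv_V_def Sv_E star_E[symmetric] by (rule Union_star_E)
  show ?thesis unfolding Sv_V Sv_E star_E graph_iso_def
    by (intro exI[of _ id]) simp
qed

theorem corollary3p8:
  fixes V :: "'a set" and E :: "'a set set" and v :: 'a
  assumes "graph V E" and "v \<in> V"
    and "card (star_classes E v) = 1 \<or> card (star_classes E v) = 2"
  shows "(card (star_classes E v) = 1 \<longrightarrow>
            (\<forall>\<phi>\<in>star_classes E v.
               graph_iso (Sv_V E v) (Sv_E E v) (star_V \<phi> v) (star_E \<phi> v)))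
       \<and> (card (star_classes E v) = 2 \<longrightarrow>
            (\<forall>\<phi>1\<in>star_classes E v. \<forall>\<phi>2\<in>star_classes E v. \<phi>1 \<noteq> \<phi>2 \<longrightarrow>
               graph_iso (Sv_V E v) (Sv_E E v)
                 (cprod_V (star_V \<phi>1 v) (star_V \<phi>2 v))
                 (cprod_E (star_V \<phi>1 v) (star_E \<phi>1 v) (star_V \<phi>2 v) (star_E \<phi>2 v))))"
proof (intro conjI impI ballI)
  fix \<phi> assume "card (star_classes E v) = 1" "\<phi> \<in> star_classes E v"
  then have "star_classes E v = {\<phi>}" by (metis card_1_singletonE singletonD)
  with assms(1) show "graph_iso (Sv_V E v) (Sv_E E v) (star_V \<phi> v) (star_E \<phi> v)"
    by (rule Sv_iso_star_single_class)
next
  fix \<phi>1 \<phi>2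
  assume "card (star_classes E v) = 2" "\<phi>1 \<in> star_classes E v" "\<phi>2 \<in> star_classes E v"
    and "\<phi>1 \<noteq> \<phi>2"
  then have "star_classes E v = {\<phi>1, \<phi>2}" by (auto simp: card_2_iff)
  with assms(1) \<open>\<phi>1 \<noteq> \<phi>2\<close> interpret two_star_classes V E v \<phi>1 \<phi>2
    by (blast intro: two_star_classesI)
  show "graph_iso (Sv_V E v) (Sv_E E v)
      (cprod_V (star_V \<phi>1 v) (star_V \<phi>2 v))
      (cprod_E (star_V \<phi>1 v) (star_E \<phi>1 v) (star_V \<phi>2 v) (star_E \<phi>2 v))"
    by (rule Sv_iso_cprod_stars)
qed

end
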